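(* Consider a twice continuously differentiable function $f(X_1,\dots,X_k)$ with $X_i\in\operatorname{Gr}(n_i,r_i)$, $i=1,\dots,k$, to be minimized. Let $X_i(t)$ be the geodesics defined by tangents $\Delta_i\in\mathbf{T}_{X_i}$, with corresponding parallel transported tangent space basis matrices $Y_i(t)=T_{X_i,\Delta_i}(t)Y_i$, where $[X_i\;Y_i]$ is orthogonal. When tangents and operators are expressed in local coordinates in these bases, the BFGS update of the Hessian approximation on the product of Grassmannians, \[ \mathcal{H}_{+}=\mathcal{H}-\frac{\langle\mathcal{H},S\rangle\otimes\langle\mathcal{H},S\rangle}{\langle\langle\mathcal{H},S\rangle,S\rangle}+\frac{Y\otimes Y}{\langle S,Y\rangle}, \] has the same optimality properties as the BFGS update for a function with variables in a Euclidean space, i.e. it is the least change update of the current Hessian approximation that satisfies the secant equation.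
   Context: Points of $\operatorname{Gr}(n,r)$ are $n\times r$ matrices with orthonormal columns; $\mathbf{T}_X=\{\Delta: X^{\mathsf{T}}\Delta=0\}$ with inner product $\operatorname{tr}(\Delta_1^{\mathsf{T}}\Delta_2)$; in the basis $Y$ (with $[X\;Y]$ orthogonal) a tangent $\Delta=YD$ has local coordinates $D=Y^{\mathsf{T}}\Delta$. For thin SVD $\Delta=U\Sigma V^{\mathsf{T}}$ the geodesic is $X(t)=[XV\;U]\begin{bmatrix}\cos\Sigma t\\ \sin\Sigma t\end{bmatrix}V^{\mathsf{T}}$ and the transport matrix is $T_{X,\Delta}(t)=[XV\;U]\begin{bmatrix}-\sin\Sigma t\\ \cos\Sigma t\end{bmatrix}U^{\mathsf{T}}+(I-UU^{\mathsf{T}})$. The Grassmann gradient of $f$ in the $i$th variable is $\Pi_{X_i}\partial f/\partial X_i$ with $\Pi_{X_i}=I-X_iX_i^{\mathsf{T}}$. In a quasi-Newton step from $(X_1,\dots,X_k)$ with search direction $(\Delta_1,\dots,\Delta_k)$ and step length $t_k$, one sets $S=(S_1,\dots,S_k)$, $S_i=t_kT_{X_i,\Delta_i}(t_k)\Delta_i$, and $Y=(Y^{(1)},\dots,Y^{(k)})$ with $Y^{(i)}$ the gradient component at the new point minus the transported ($T_{X_i,\Delta_i}(t_k)$) gradient component at the old point; in local coordinates these are expressed in the bases $Y_i(t_k)$. The Hessian approximation $\mathcal{H}$ is a linear operator on $\mathbf{T}_{X_1}\times\dots\times\mathbf{T}_{X_k}$ (block form with blocks $\mathcal{H}_{ij}:\mathbf{T}_{X_j}\to\mathbf{T}_{X_i}$);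 $\langle\mathcal{H},S\rangle$ denotes its action on $S$, $\langle S,Y\rangle=\sum_i\langle S_i,Y^{(i)}\rangle$, and $\Delta\otimes\Gamma$ for tuples is the block operator with blocks $\Delta_i\otimes\Gamma_j$ (i.e. $\Gamma\mapsto$ the rank-one operator $Z\mapsto\langle\Gamma,Z\rangle\Delta$ blockwise). Euclidean BFGS optimality (as meant here): for $s\neq 0$, $y$ with $y^{\mathsf{T}}s>0$ and $H=LL^{\mathsf{T}}$ ($L$ invertible), the BFGS update $H_+=H-\frac{Hss^{\mathsf{T}}H}{s^{\mathsf{T}}Hs}+\frac{yy^{\mathsf{T}}}{y^{\mathsf{T}}s}$ satisfies $H_+s=y$, is symmetric positive definite, and equals $L_+L_+^{\mathsf{T}}$ where $L_+$ is the Frobenius-nearest matrix to $L$ mapping $v$ to $y$, with $v=\alpha L^{\mathsf{T}}s$, $\alpha^2=y^{\mathsf{T}}s/s^{\mathsf{T}}Hs$. *)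

theory Defs
  imports Complex_Main "Jordan_Normal_Form.Matrix"
begin

definition mtrace :: "real mat \<Rightarrow> real" where
  "mtrace A = (\<Sum>j<dim_row A. A $$ (j, j))"

definition mcat :: "real mat \<Rightarrow> real mat \<Rightarrow> real mat" where
  "mcat A B = mat (dim_row A) (dim_col A + dim_col B)
     (\<lambda>(a, b). if b < dim_col A then A $$ (a, b) else B $$ (a, b - dim_col A))"

definition orthogonal_mat :: "real mat \<Rightarrow> bool" where
  "orthogonal_mat Q \<longleftrightarrow> dim_row Q = dim_col Q \<and>
     Q\<^sup>T * Q = 1\<^sub>m (dim_col Q) \<and> Q * Q\<^sup>T = 1\<^sub>m (dim_row Q)"

definition diag_fun :: "(real \<Rightarrow> real) \<Rightarrow> real mat \<Rightarrow> real mat" where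
  "diag_fun g D = mat (dim_row D) (dim_col D) (\<lambda>(a, b). if a = b then g (D $$ (a, a)) else 0)"

(* geodesic X(t) = [XV U] [cos(Sigma t); sin(Sigma t)] V^T *)
definition grass_geod :: "real mat \<Rightarrow> real mat \<Rightarrow> real mat \<Rightarrow> real mat \<Rightarrow> real \<Rightarrow> real mat" where
  "grass_geod X U Sig V t =
     (X * V * diag_fun (\<lambda>s. cos (s * t)) Sig + U * diag_fun (\<lambda>s. sin (s * t)) Sig) * V\<^sup>T"

(* transport matrix T(t) = [XV U] [-sin(Sigma t); cos(Sigma t)] U^T + (I - U U^T) *)
definition grass_transp :: "real mat \<Rightarrow> real mat \<Rightarrow> real mat \<Rightarrow> real mat \<Rightarrow> real \<Rightarrow> real mat" where
  "grass_transp X U Sig V t =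
     (X * V * (- diag_fun (\<lambda>s. sin (s * t)) Sig) + U * diag_fun (\<lambda>s. cos (s * t)) Sig) * U\<^sup>T
     + (1\<^sub>m (dim_row X) - U * U\<^sup>T)"

definition grass_proj :: "real mat \<Rightarrow> real mat" where
  "grass_proj X = 1\<^sub>m (dim_row X) - X * X\<^sup>T"

definition tinner :: "nat \<Rightarrow> (nat \<Rightarrow> real mat) \<Rightarrow> (nat \<Rightarrow> real mat) \<Rightarrow> real" where
  "tinner k A B = (\<Sum>i<k. mtrace ((A i)\<^sup>T * B i))"

(* BFGS update on the product of tangent spaces:
   H+ = H - <H,S> (x) <H,S> / <<H,S>,S> + Y (x) Y / <S,Y>,
   with (Delta (x) Gamma) Z = <Gamma,Z> Delta *)
definition bfgs_tangent_update ::
  "nat \<Rightarrow> ((nat \<Rightarrow> real mat) \<Rightarrow> (nat \<Rightarrow> real mat)) \<Rightarrow> (nat \<Rightarrow> real mat) \<Rightarrow> (nat \<Rightarrow> real mat)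
   \<Rightarrow> (nat \<Rightarrow> real mat) \<Rightarrow> (nat \<Rightarrow> real mat)" where
  "bfgs_tangent_update k H S Y Z = (\<lambda>i.
      H Z i - (tinner k (H S) Z / tinner k (H S) S) \<cdot>\<^sub>m H S i
            + (tinner k Y Z / tinner k S Y) \<cdot>\<^sub>m Y i)"

(* index set of local coordinates: block i, entry (a,b) of the (n_i - r_i) x r_i matrix D_i *)
type_synonym cidx = "nat \<times> nat \<times> nat"

definition coord_idx :: "nat \<Rightarrow> (nat \<Rightarrow> nat) \<Rightarrow> (nat \<Rightarrow> nat) \<Rightarrow> cidx set" where
  "coord_idx k n r = {(i, a, b). i < k \<and> a < n i - r i \<and> b < r i}"

definition coord :: "(nat \<Rightarrow> real mat) \<Rightarrow> (nat \<Rightarrow> real mat) \<Rightarrow> cidx \<Rightarrow> real" where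
  "coord Yb Z = (\<lambda>(i, a, b). ((Yb i)\<^sup>T * Z i) $$ (a, b))"

definition lift :: "(nat \<Rightarrow> nat) \<Rightarrow> (nat \<Rightarrow> nat) \<Rightarrow> (nat \<Rightarrow> real mat) \<Rightarrow> (cidx \<Rightarrow> real) \<Rightarrow> nat \<Rightarrow> real mat" where
  "lift n r Yb d = (\<lambda>i. Yb i * mat (n i - r i) (r i) (\<lambda>(a, b). d (i, a, b)))"

definition cmv :: "cidx set \<Rightarrow> (cidx \<Rightarrow> cidx \<Rightarrow> real) \<Rightarrow> (cidx \<Rightarrow> real) \<Rightarrow> cidx \<Rightarrow> real" where
  "cmv I M v = (\<lambda>p. \<Sum>q\<in>I. M p q * v q)"

definition cinner :: "cidx set \<Rightarrow> (cidx \<Rightarrow> real) \<Rightarrow> (cidx \<Rightarrow> real) \<Rightarrow> real" where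
  "cinner I u v = (\<Sum>p\<in>I. u p * v p)"

definition ctransp :: "(cidx \<Rightarrow> cidx \<Rightarrow> real) \<Rightarrow> cidx \<Rightarrow> cidx \<Rightarrow> real" where
  "ctransp M = (\<lambda>p q. M q p)"

definition cmm :: "cidx set \<Rightarrow> (cidx \<Rightarrow> cidx \<Rightarrow> real) \<Rightarrow> (cidx \<Rightarrow> cidx \<Rightarrow> real) \<Rightarrow> cidx \<Rightarrow> cidx \<Rightarrow> real" where
  "cmm I A B = (\<lambda>p q. \<Sum>m\<in>I. A p m * B m q)"

definition cfrob :: "cidx set \<Rightarrow> (cidx \<Rightarrow> cidx \<Rightarrow> real) \<Rightarrow> real" where
  "cfrob I M = sqrt (\<Sum>p\<in>I. \<Sum>q\<in>I. (M p q)\<^sup>2)"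

definition cinvertible :: "cidx set \<Rightarrow> (cidx \<Rightarrow> cidx \<Rightarrow> real) \<Rightarrow> bool" where
  "cinvertible I L \<longleftrightarrow> (\<exists>Li. \<forall>p\<in>I. \<forall>q\<in>I.
      cmm I L Li p q = (if p = q then 1 else 0) \<and> cmm I Li L p q = (if p = q then 1 else 0))"

(* Euclidean BFGS optimality properties of Hp as update of H = L L^T for the pair (s, y):
   secant equation, symmetric positive definite, and Hp = L+ L+^T where L+ is the
   (unique) Frobenius-nearest matrix to L mapping v = alpha L^T s to y,
   alpha^2 = y^T s / s^T H s. *)
definition bfgs_optimal ::
  "cidx set \<Rightarrow> (cidx \<Rightarrow> cidx \<Rightarrow> real) \<Rightarrow> (cidx \<Rightarrow> cidx \<Rightarrow> real) \<Rightarrow> (cidx \<Rightarrow> real) \<Rightarrow> (cidx \<Rightarrow> real)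
   \<Rightarrow> (cidx \<Rightarrow> cidx \<Rightarrow> real) \<Rightarrow> bool" where
  "bfgs_optimal I H L s y Hp \<longleftrightarrow>
     (let alpha = sqrt (cinner I y s / cinner I s (cmv I H s));
          v = (\<lambda>p. alpha * cmv I (ctransp L) s p)
      in (\<forall>p\<in>I. cmv I Hp s p = y p)
       \<and> (\<forall>p\<in>I. \<forall>q\<in>I. Hp p q = Hp q p)
       \<and> (\<forall>w. (\<exists>p\<in>I. w p \<noteq> 0) \<longrightarrow> cinner I w (cmv I Hp w) > 0)
       \<and> (\<exists>Lp. (\<forall>p\<in>I. cmv I Lp v p = y p)
             \<and> (\<forall>M. (\<forall>p\<in>I. cmv I M v p = y p) \<and> (\<exists>p\<in>I. \<exists>q\<in>I. M p q \<noteq> Lp p q)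
                    \<longrightarrow> cfrob I (\<lambda>p q. Lp p q - L p q) < cfrob I (\<lambda>p q. M p q - L p q))
             \<and> (\<forall>p\<in>I. \<forall>q\<in>I. Hp p q = cmm I Lp (ctransp Lp) p q)))"

end

theory Submission
  imports Defs
begin

text \<open>Expressed in the transported bases \<open>Y\<^sub>i(t)\<close>, which stay orthonormal, the lift
  \<open>D \<mapsto> (Y\<^sub>i(t) D\<^sub>i)\<^sub>i\<close> is an isometry from the coordinate space onto the product of the
  tangent spaces, so inner products and rank-one operators are carried over verbatim: in coordinates the
  update is the Euclidean BFGS matrix \<open>H\<^sub>+\<close> for the coordinate vectors \<open>s\<close> and \<open>y\<close> of \<open>S\<close> and \<open>Y\<close>.
  For \<open>H = L L\<^sup>T\<close> one then checks that \<open>L\<^sub>+ = L + (y - \<alpha> H s) v\<^sup>T / y\<^sup>T s\<close>, \<open>v = \<alpha> L\<^sup>T s\<close>,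
  maps \<open>v\<close> to \<open>y\<close> and factors \<open>H\<^sub>+ = L\<^sub>+ L\<^sub>+\<^sup>T\<close>; it is the nearest such matrix because its correction
  is Frobenius-orthogonal to every matrix annihilating \<open>v\<close>, and \<open>L\<^sub>+\<^sup>T\<close> is injective, so \<open>H\<^sub>+\<close> is
  positive definite. Orthonormality of \<open>Y\<^sub>i(t)\<close> rests on \<open>X\<^sup>T U \<Sigma> = 0\<close>, a consequence of
  \<open>X\<^sup>T \<Delta> = 0\<close>.\<close>

section \<open>Euclidean BFGS in coordinates\<close>

lemma cmv_cong:
  assumes "\<forall>p\<in>I. \<forall>q\<in>I. A p q = B p q" and "p \<in> I"
  shows "cmv I A v p = cmv I B v p"
  using assms unfolding cmv_def by simp

lemma cinner_cmv_cong:
  assumes "\<forall>p\<in>I. \<forall>q\<in>I. A p q = B p q"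
  shows "cinner I w (cmv I A v) = cinner I w (cmv I B v)"
  unfolding cinner_def using cmv_cong[OF assms] by simp

lemma cinner_cmv_gram:
  assumes "finite I"
  shows "cinner I w (cmv I (cmm I A (ctransp A)) w) = (\<Sum>m\<in>I. (cmv I (ctransp A) w m)\<^sup>2)"
proof -
  have "cinner I w (cmv I (cmm I A (ctransp A)) w)
      = (\<Sum>p\<in>I. \<Sum>q\<in>I. \<Sum>m\<in>I. (A p m * w p) * (A q m * w q))"
    unfolding cinner_def cmv_def cmm_def ctransp_def
    by (simp add: sum_distrib_left sum_distrib_right mult_ac)
  also have "\<dots> = (\<Sum>m\<in>I. \<Sum>p\<in>I. \<Sum>q\<in>I. (A p m * w p) * (A q m * w q))"
    by (subst sum.swap) (rule sum.cong[OF refl], rule sum.swap)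
  also have "\<dots> = (\<Sum>m\<in>I. (cmv I (ctransp A) w m)\<^sup>2)"
    unfolding cmv_def ctransp_def by (simp add: power2_eq_square sum_product)
  finally show ?thesis .
qed

lemma cinvertible_transp_injective:
  assumes "finite I" and "cinvertible I L" and "\<forall>m\<in>I. cmv I (ctransp L) w m = 0"
  shows "\<forall>q\<in>I. w q = 0"
proof
  fix q assume q: "q \<in> I"
  obtain Li where Li: "\<forall>p\<in>I. \<forall>q\<in>I. cmm I L Li p q = (if p = q then 1 else 0)"
    using assms(2) unfolding cinvertible_def by blast
  have "w q = (\<Sum>p\<in>I. if p = q then w p else 0)"
    using q assms(1) by simp
  also have "\<dots> = (\<Sum>p\<in>I. cmm I L Li p q * w p)"
    using Li q by (intro sum.cong) auto
  also have "\<dots> = (\<Sum>m\<in>I. Li m q * cmv I (ctransp L) w m)"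
    unfolding cmm_def cmv_def ctransp_def sum_distrib_right sum_distrib_left
    by (subst sum.swap) (simp add: mult_ac)
  also have "\<dots> = 0" using assms(3) by simp
  finally show "w q = 0" .
qed

lemma cinner_cmv_gram_pos:
  assumes "finite I"
    and inj: "\<And>u. \<forall>m\<in>I. cmv I (ctransp A) u m = 0 \<Longrightarrow> \<forall>q\<in>I. u q = 0"
    and "\<exists>p\<in>I. w p \<noteq> 0"
  shows "cinner I w (cmv I (cmm I A (ctransp A)) w) > 0"
proof -
  obtain m where "m \<in> I" "cmv I (ctransp A) w m \<noteq> 0"
    using inj assms(3) by blast
  then show ?thesis
    unfolding cinner_cmv_gram[OF assms(1)] by (intro sum_pos2[OF assms(1)]) auto
qed

text \<open>A correction of \<open>L\<close> by a multiple of \<open>v\<^sup>T\<close> is Frobenius-orthogonal to every matrix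
  annihilating \<open>v\<close>; Pythagoras then makes it the nearest matrix with the prescribed action on \<open>v\<close>.\<close>
lemma cfrob_rank_one_correction_nearest:
  assumes fin: "finite I"
    and Lp: "\<forall>p\<in>I. \<forall>m\<in>I. Lp p m = L p m + z p * v m"
    and M: "\<forall>p\<in>I. cmv I M v p = cmv I Lp v p"
    and ne: "\<exists>p\<in>I. \<exists>q\<in>I. M p q \<noteq> Lp p q"
  shows "cfrob I (\<lambda>p q. Lp p q - L p q) < cfrob I (\<lambda>p q. M p q - L p q)"
proof -
  define F where "F p q = M p q - Lp p q" for p q
  have Fv: "(\<Sum>q\<in>I. F p q * v q) = 0" if "p \<in> I" for p
    using M that unfolding F_def cmv_def by (simp add: algebra_simps sum_subtractf)
  have cross: "(\<Sum>p\<in>I. \<Sum>q\<in>I. (Lp p q - L p q) * F p q) = 0"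
  proof -
    have "(\<Sum>p\<in>I. \<Sum>q\<in>I. (Lp p q - L p q) * F p q) = (\<Sum>p\<in>I. z p * (\<Sum>q\<in>I. F p q * v q))"
      using Lp by (simp add: sum_distrib_left mult_ac)
    then show ?thesis using Fv by simp
  qed
  have pos: "(\<Sum>p\<in>I. \<Sum>q\<in>I. (F p q)\<^sup>2) > 0"
  proof -
    obtain p1 q1 where pq1: "p1 \<in> I" "q1 \<in> I" "F p1 q1 \<noteq> 0" using ne F_def by auto
    have "(\<Sum>q\<in>I. (F p1 q)\<^sup>2) > 0" by (rule sum_pos2[OF fin pq1(2)]) (use pq1 in auto)
    then show ?thesis
      by (intro sum_pos2[OF fin pq1(1), where f="\<lambda>p. \<Sum>q\<in>I. (F p q)\<^sup>2"]) (auto intro: sum_nonneg)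
  qed
  have "(\<Sum>p\<in>I. \<Sum>q\<in>I. (M p q - L p q)\<^sup>2)
      = (\<Sum>p\<in>I. \<Sum>q\<in>I. (Lp p q - L p q)\<^sup>2 + 2 * ((Lp p q - L p q) * F p q) + (F p q)\<^sup>2)"
    unfolding F_def by (intro sum.cong refl) (simp add: power2_eq_square algebra_simps)
  also have "\<dots> = (\<Sum>p\<in>I. \<Sum>q\<in>I. (Lp p q - L p q)\<^sup>2) + 2 * (\<Sum>p\<in>I. \<Sum>q\<in>I. (Lp p q - L p q) * F p q)
                 + (\<Sum>p\<in>I. \<Sum>q\<in>I. (F p q)\<^sup>2)"
    by (simp add: sum.distrib sum_distrib_left)
  finally have "(\<Sum>p\<in>I. \<Sum>q\<in>I. (Lp p q - L p q)\<^sup>2) < (\<Sum>p\<in>I. \<Sum>q\<in>I. (M p q - L p q)\<^sup>2)"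
    using cross pos by simp
  then show ?thesis unfolding cfrob_def by simp
qed

locale bfgs_step =
  fixes I :: "cidx set" and H L :: "cidx \<Rightarrow> cidx \<Rightarrow> real" and s y :: "cidx \<Rightarrow> real"
  assumes finite_I: "finite I"
    and H_gram: "\<forall>p\<in>I. \<forall>q\<in>I. H p q = cmm I L (ctransp L) p q"
    and L_invertible: "cinvertible I L"
    and curvature: "cinner I y s > 0"
begin

abbreviation "Hs \<equiv> cmv I H s"
abbreviation "sHs \<equiv> cinner I s Hs"
abbreviation "ys \<equiv> cinner I y s"

definition "alpha = sqrt (ys / sHs)"
definition "v = (\<lambda>p. alpha * cmv I (ctransp L) s p)"

text \<open>This is \<open>L + (y - L v) v\<^sup>T / v\<^sup>T v\<close>, since \<open>L v = \<alpha> H s\<close> and \<open>v\<^sup>T v = y\<^sup>T s\<close>.\<close>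
definition "L_plus = (\<lambda>p m. L p m + (y p - alpha * Hs p) * v m / ys)"

lemma sHs_pos: "sHs > 0"
proof -
  have "\<exists>p\<in>I. s p \<noteq> 0"
    using curvature unfolding cinner_def by (metis (no_types, lifting) less_irrefl mult_zero_right sum.neutral)
  then have "cinner I s (cmv I (cmm I L (ctransp L)) s) > 0"
    using cinner_cmv_gram_pos[OF finite_I cinvertible_transp_injective[OF finite_I L_invertible]] by blast
  then show ?thesis using cinner_cmv_cong[OF H_gram] by simp
qed

lemma alpha_pos: "alpha > 0"
  unfolding alpha_def using curvature sHs_pos by simp

lemma alpha_sq: "alpha\<^sup>2 * sHs = ys"
  unfolding alpha_def using curvature sHs_pos by simp

lemma v_norm: "cinner I v v = ys"
proof -
  have "cinner I v v = alpha\<^sup>2 * cinner I s (cmv I (cmm I L (ctransp L)) s)"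
    unfolding cinner_cmv_gram[OF finite_I] unfolding cinner_def v_def
    by (simp add: sum_distrib_left power2_eq_square mult_ac)
  then show ?thesis using alpha_sq cinner_cmv_cong[OF H_gram] by simp
qed

lemma L_v:
  assumes "p \<in> I"
  shows "cmv I L v p = alpha * Hs p"
proof -
  have "cmv I L v p = alpha * (\<Sum>m\<in>I. \<Sum>q\<in>I. L p m * L q m * s q)"
    unfolding v_def cmv_def ctransp_def by (simp add: sum_distrib_left mult_ac)
  also have "\<dots> = alpha * cmv I (cmm I L (ctransp L)) s p"
    unfolding cmv_def cmm_def ctransp_def sum_distrib_right by (subst sum.swap) simp
  finally show ?thesis using cmv_cong[OF H_gram assms] by simp
qed

lemma L_plus_maps_v: "p \<in> I \<Longrightarrow> cmv I L_plus v p = y p"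
proof -
  assume p: "p \<in> I"
  obtain c where c: "c = (y p - alpha * Hs p) / ys" by simp
  have "cmv I L_plus v p = cmv I L v p + c * cinner I v v"
    unfolding L_plus_def c
    by (simp add: cmv_def cinner_def algebra_simps sum.distrib sum_distrib_left sum_divide_distrib)
  then show ?thesis using L_v[OF p] v_norm curvature c by simp
qed

lemma L_plus_gram:
  assumes p: "p \<in> I" and q: "q \<in> I"
  shows "cmm I L_plus (ctransp L_plus) p q = H p q - Hs p * Hs q / sHs + y p * y q / ys"
proof -
  define z where "z p = y p - alpha * Hs p" for p
  have "cmm I L_plus (ctransp L_plus) p q = cmm I L (ctransp L) p q
        + z q / ys * cmv I L v p + z p / ys * cmv I L v q + z p * z q / ys\<^sup>2 * cinner I v v"
    unfolding cmm_def ctransp_def L_plus_def z_def[symmetric]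
    by (simp add: cmv_def cinner_def algebra_simps sum.distrib sum_distrib_left power2_eq_square
        sum_divide_distrib)
  also have "\<dots> = H p q + (y p * y q - alpha\<^sup>2 * Hs p * Hs q) / ys"
    using L_v[OF p] L_v[OF q] v_norm curvature H_gram p q
    by (simp add: z_def power2_eq_square field_simps)
  also have "\<dots> = H p q - Hs p * Hs q / sHs + y p * y q / ys"
    using alpha_sq sHs_pos curvature by (simp add: field_simps)
  finally show ?thesis .
qed

text \<open>\<open>L\<^sub>+\<^sup>T w = L\<^sup>T (w + c \<alpha> s)\<close> with \<open>c = z\<^sup>T w / y\<^sup>T s\<close>, so \<open>w\<close> is a multiple of \<open>s\<close>;
  pairing with \<open>z = y - \<alpha> H s\<close> then forces \<open>c = 0\<close>.\<close>
lemma L_plus_transp_injective: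
  assumes w: "\<forall>m\<in>I. cmv I (ctransp L_plus) w m = 0"
  shows "\<forall>q\<in>I. w q = 0"
proof -
  define z where "z p = y p - alpha * Hs p" for p
  define c where "c = cinner I z w / ys"
  have "cmv I (ctransp L) (\<lambda>p. w p + c * alpha * s p) m = cmv I (ctransp L) w m + c * v m" for m
    unfolding v_def by (simp add: cmv_def ctransp_def algebra_simps sum.distrib sum_distrib_left)
  moreover have "cmv I (ctransp L_plus) w m = cmv I (ctransp L) w m + c * v m" for m
    unfolding L_plus_def c_def z_def[symmetric]
    by (simp add: cmv_def cinner_def ctransp_def algebra_simps sum.distrib sum_divide_distrib
        sum_distrib_left)
  ultimately have "\<forall>q\<in>I. w q + c * alpha * s q = 0"
    using cinvertible_transp_injective[OF finite_I L_invertible, of "\<lambda>p. w p + c * alpha * s p"] w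
    by simp
  then have ws: "\<forall>q\<in>I. w q = - (c * alpha) * s q" by (simp add: eq_neg_iff_add_eq_0)
  have "cinner I z s = ys - alpha * sHs"
    unfolding z_def cinner_def by (simp add: algebra_simps sum_subtractf sum_distrib_left)
  moreover have "cinner I z w = - (c * alpha) * cinner I z s"
    unfolding cinner_def using ws by (simp add: sum_distrib_left algebra_simps)
  moreover have "cinner I z w = c * ys"
    unfolding c_def using curvature by simp
  ultimately have "c * ys = - (c * alpha) * (ys - alpha * sHs)"
    by simp
  also have "\<dots> = - (c * alpha) * ys + c * (alpha\<^sup>2 * sHs)"
    by (simp add: algebra_simps power2_eq_square)
  finally have "c * alpha * ys = 0"
    unfolding alpha_sq by (simp add: algebra_simps)
  then have "c = 0" using alpha_pos curvature by simp
  then show ?thesis using ws by simp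
qed

theorem bfgs_optimal_update:
  assumes Hp: "\<forall>p\<in>I. \<forall>q\<in>I. Hp p q = H p q - Hs p * Hs q / sHs + y p * y q / ys"
  shows "bfgs_optimal I H L s y Hp"
proof -
  have Hp_gram: "\<forall>p\<in>I. \<forall>q\<in>I. Hp p q = cmm I L_plus (ctransp L_plus) p q"
    using Hp L_plus_gram by simp
  have secant: "cmv I Hp s p = y p" if "p \<in> I" for p
  proof -
    obtain h where h: "h = Hs" by simp
    have "cmv I Hp s p = (\<Sum>q\<in>I. H p q * s q - h p / sHs * (s q * h q) + y p / ys * (y q * s q))"
      unfolding cmv_def[of I Hp] h by (intro sum.cong refl) (simp add: Hp[rule_format, OF that] algebra_simps)
    also have "\<dots> = h p - h p / sHs * cinner I s h + y p / ys * ys"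
      unfolding h by (simp add: sum.distrib sum_subtractf sum_distrib_left cinner_def cmv_def)
    finally show ?thesis using sHs_pos curvature h by simp
  qed
  have symmetric: "Hp p q = Hp q p" if "p \<in> I" "q \<in> I" for p q
    using Hp H_gram that by (simp add: cmm_def ctransp_def mult.commute)
  have posdef: "cinner I w (cmv I Hp w) > 0" if "\<exists>p\<in>I. w p \<noteq> 0" for w
    using cinner_cmv_gram_pos[OF finite_I L_plus_transp_injective that] cinner_cmv_cong[OF Hp_gram]
    by simp
  have nearest: "cfrob I (\<lambda>p q. L_plus p q - L p q) < cfrob I (\<lambda>p q. M p q - L p q)"
    if "\<forall>p\<in>I. cmv I M v p = y p" "\<exists>p\<in>I. \<exists>q\<in>I. M p q \<noteq> L_plus p q" for M
    using cfrob_rank_one_correction_nearest[OF finite_I _ _ that(2),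
        of L "\<lambda>p. (y p - alpha * Hs p) / ys" v] that(1) L_plus_maps_v
    unfolding L_plus_def by simp
  show ?thesis
    unfolding bfgs_optimal_def Let_def alpha_def[symmetric] v_def[symmetric]
    using secant symmetric posdef L_plus_maps_v nearest Hp_gram by blast
qed

end

section \<open>Matrix identities\<close>

lemma mat_mult_entry:
  fixes A B :: "real mat"
  assumes "A \<in> carrier_mat a n" "B \<in> carrier_mat n b" "p < a" "q < b"
  shows "(A * B) $$ (p, q) = (\<Sum>j<n. A $$ (p, j) * B $$ (j, q))"
  using assms by (simp add: scalar_prod_def lessThan_atLeast0)

lemma assoc_mult_mat_dim:
  fixes A B C :: "real mat"
  assumes "dim_col A = dim_row B" "dim_col B = dim_row C"
  shows "A * B * C = A * (B * C)"
  using assms by (intro assoc_mult_mat[of _ "dim_row A" "dim_col A" _ "dim_col B" _ "dim_col C"]) auto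

lemma transpose_mult_dim:
  fixes A B :: "real mat"
  assumes "dim_col A = dim_row B"
  shows "(A * B)\<^sup>T = B\<^sup>T * A\<^sup>T"
  using assms by (intro transpose_mult[of _ "dim_row A" "dim_col A" _ "dim_col B"]) auto

lemma transpose_mult_add3:
  fixes A B C :: "real mat"
  assumes "A \<in> carrier_mat n m" "B \<in> carrier_mat n m" "C \<in> carrier_mat n m"
  shows "(A + B + C)\<^sup>T * (A + B + C) = A\<^sup>T * A + (A\<^sup>T * B + B\<^sup>T * A) + B\<^sup>T * B
           + (A\<^sup>T * C + C\<^sup>T * A) + (B\<^sup>T * C + C\<^sup>T * B) + C\<^sup>T * C"
  using assms
  by (intro eq_matI) (auto simp: scalar_prod_def sum.distrib[symmetric] algebra_simps intro!: sum.cong)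

lemma mult_diagonal_entry:
  fixes N D :: "real mat"
  assumes "N \<in> carrier_mat m r" "D \<in> carrier_mat r r" "diagonal_mat D" "p < m" "q < r"
  shows "(N * D) $$ (p, q) = N $$ (p, q) * D $$ (q, q)"
proof -
  have "(N * D) $$ (p, q) = (\<Sum>j<r. if j = q then N $$ (p, q) * D $$ (q, q) else 0)"
    using assms unfolding mat_mult_entry[OF assms(1,2,4,5)] diagonal_mat_def
    by (intro sum.cong) auto
  then show ?thesis using assms by simp
qed

lemma diag_fun_carrier [simp]: "Sig \<in> carrier_mat r r \<Longrightarrow> diag_fun g Sig \<in> carrier_mat r r"
  unfolding diag_fun_def by simp

lemma diag_fun_mult_entry:
  fixes Sig a :: "real mat"
  assumes "Sig \<in> carrier_mat r r" "a \<in> carrier_mat r m" "p < r" "q < m"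
  shows "(diag_fun g Sig * a) $$ (p, q) = g (Sig $$ (p, p)) * a $$ (p, q)"
proof -
  have "(diag_fun g Sig * a) $$ (p, q) = (\<Sum>j<r. if j = p then g (Sig $$ (p, p)) * a $$ (p, q) else 0)"
    using assms unfolding mat_mult_entry[OF diag_fun_carrier[OF assms(1)] assms(2-4)]
    by (intro sum.cong) (auto simp: diag_fun_def)
  then show ?thesis using assms by simp
qed

lemma mult_diag_fun_entry:
  fixes Sig N :: "real mat"
  assumes "N \<in> carrier_mat m r" "Sig \<in> carrier_mat r r" "p < m" "q < r"
  shows "(N * diag_fun g Sig) $$ (p, q) = N $$ (p, q) * g (Sig $$ (q, q))"
proof -
  have "(N * diag_fun g Sig) $$ (p, q) = (\<Sum>j<r. if j = q then N $$ (p, q) * g (Sig $$ (q, q)) else 0)"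
    using assms unfolding mat_mult_entry[OF assms(1) diag_fun_carrier[OF assms(2)] assms(3-4)]
    by (intro sum.cong) (auto simp: diag_fun_def)
  then show ?thesis using assms by simp
qed

lemma uminus_diag_fun: "- diag_fun g Sig = diag_fun (\<lambda>s. - g s) Sig"
  unfolding diag_fun_def by (intro eq_matI) auto

lemma diag_fun_minus_one:
  "Sig \<in> carrier_mat r r \<Longrightarrow> diag_fun g Sig - 1\<^sub>m r = diag_fun (\<lambda>s. g s - 1) Sig"
  unfolding diag_fun_def by (intro eq_matI) auto

lemma mult_diag_fun_eq_0:
  fixes N Sig :: "real mat"
  assumes N: "N \<in> carrier_mat m r" and Sig: "Sig \<in> carrier_mat r r" "diagonal_mat Sig"
    and NSig: "N * Sig = 0\<^sub>m m r" and g0: "g 0 = 0"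
  shows "N * diag_fun g Sig = 0\<^sub>m m r"
proof (rule eq_matI)
  fix p q assume "p < dim_row (0\<^sub>m m r)" "q < dim_col (0\<^sub>m m r)"
  then have pq: "p < m" "q < r" by auto
  have "N $$ (p, q) * Sig $$ (q, q) = 0"
    using mult_diagonal_entry[OF N Sig pq] NSig pq by (metis index_zero_mat(1))
  then show "(N * diag_fun g Sig) $$ (p, q) = 0\<^sub>m m r $$ (p, q)"
    using mult_diag_fun_entry[OF N Sig(1) pq] pq g0 by auto
qed (use N Sig in \<open>auto simp: diag_fun_def\<close>)

text \<open>Entrywise this is \<open>sin\<^sup>2 + 2 (cos - 1) + (cos - 1)\<^sup>2 = 0\<close>.\<close>
lemma sin_cos_gram_cancel:
  fixes Sig a :: "real mat" and t :: real
  assumes Sig: "Sig \<in> carrier_mat r r" and a: "a \<in> carrier_mat r m"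
  defines "Sn \<equiv> diag_fun (\<lambda>s. - sin (s * t)) Sig" and "C1 \<equiv> diag_fun (\<lambda>s. cos (s * t) - 1) Sig"
  shows "(Sn * a)\<^sup>T * (Sn * a) + (a\<^sup>T * (C1 * a) + (C1 * a)\<^sup>T * a) + (C1 * a)\<^sup>T * (C1 * a) = 0\<^sub>m m m"
proof (rule eq_matI)
  fix p q assume "p < dim_row (0\<^sub>m m m)" "q < dim_col (0\<^sub>m m m)"
  then have pq: "p < m" "q < m" by auto
  have Sn: "Sn * a \<in> carrier_mat r m" and C1: "C1 * a \<in> carrier_mat r m"
    unfolding Sn_def C1_def using mult_carrier_mat[OF diag_fun_carrier[OF Sig] a] by blast+
  have cos_sq: "cos x * cos x = 1 - sin x * sin x" for x :: real
    using sin_cos_squared_add[of x] by (simp add: power2_eq_square)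
  have gram: "(M1\<^sup>T * M2) $$ (p, q) = (\<Sum>j<r. M1 $$ (j, p) * M2 $$ (j, q))"
    if "M1 \<in> carrier_mat r m" "M2 \<in> carrier_mat r m" for M1 M2 :: "real mat"
    using that pq by (simp add: scalar_prod_def lessThan_atLeast0)
  show "((Sn * a)\<^sup>T * (Sn * a) + (a\<^sup>T * (C1 * a) + (C1 * a)\<^sup>T * a) + (C1 * a)\<^sup>T * (C1 * a)) $$ (p, q)
      = 0\<^sub>m m m $$ (p, q)"
    using Sn C1 a pq carrier_matD[OF Sn] carrier_matD[OF C1] carrier_matD[OF a]
    by (simp add: gram Sn_def C1_def diag_fun_mult_entry[OF Sig a] sum.distrib[symmetric] algebra_simps
        cos_sq del: index_mult_mat(1))
qed (use a in auto)

section \<open>Transport of the complementary basis\<close>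

lemma mcat_carrier: "X \<in> carrier_mat n r \<Longrightarrow> Yb \<in> carrier_mat n m \<Longrightarrow> mcat X Yb \<in> carrier_mat n (r + m)"
  unfolding mcat_def by auto

lemma mcat_index:
  "X \<in> carrier_mat n r \<Longrightarrow> Yb \<in> carrier_mat n m \<Longrightarrow> i < n \<Longrightarrow> j < r + m \<Longrightarrow>
    mcat X Yb $$ (i, j) = (if j < r then X $$ (i, j) else Yb $$ (i, j - r))"
  unfolding mcat_def by auto

lemma orthogonal_mat_mcat_columns:
  fixes X Yb :: "real mat"
  assumes X: "X \<in> carrier_mat n r" and Yb: "Yb \<in> carrier_mat n m" and orth: "orthogonal_mat (mcat X Yb)"
  shows "X\<^sup>T * X = 1\<^sub>m r" "X\<^sup>T * Yb = 0\<^sub>m r m" "Yb\<^sup>T * Yb = 1\<^sub>m m"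
proof -
  let ?Q = "mcat X Yb"
  have Q: "?Q \<in> carrier_mat n (r + m)" by (rule mcat_carrier[OF X Yb])
  have gram: "(\<Sum>j<n. ?Q $$ (j, p) * ?Q $$ (j, q)) = (if p = q then 1 else 0)"
    if "p < r + m" "q < r + m" for p q
    using mat_mult_entry[of "?Q\<^sup>T" "r + m" n ?Q "r + m" p q] orth Q that
    unfolding orthogonal_mat_def by simp
  show "X\<^sup>T * X = 1\<^sub>m r"
  proof (rule eq_matI)
    fix p q assume "p < dim_row (1\<^sub>m r)" "q < dim_col (1\<^sub>m r)"
    then have pq: "p < r" "q < r" by auto
    then have "(X\<^sup>T * X) $$ (p, q) = (\<Sum>j<n. ?Q $$ (j, p) * ?Q $$ (j, q))"
      using X by (simp add: scalar_prod_def lessThan_atLeast0 mcat_index[OF X Yb])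
    then show "(X\<^sup>T * X) $$ (p, q) = 1\<^sub>m r $$ (p, q)" using gram pq by simp
  qed (use X in auto)
  show "X\<^sup>T * Yb = 0\<^sub>m r m"
  proof (rule eq_matI)
    fix p q assume "p < dim_row (0\<^sub>m r m)" "q < dim_col (0\<^sub>m r m)"
    then have pq: "p < r" "q < m" by auto
    then have "(X\<^sup>T * Yb) $$ (p, q) = (\<Sum>j<n. ?Q $$ (j, p) * ?Q $$ (j, r + q))"
      using X Yb by (simp add: scalar_prod_def lessThan_atLeast0 mcat_index[OF X Yb])
    then show "(X\<^sup>T * Yb) $$ (p, q) = 0\<^sub>m r m $$ (p, q)" using gram[of p "r + q"] pq by simp
  qed (use X Yb in auto)
  show "Yb\<^sup>T * Yb = 1\<^sub>m m"
  proof (rule eq_matI)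
    fix p q assume "p < dim_row (1\<^sub>m m)" "q < dim_col (1\<^sub>m m)"
    then have pq: "p < m" "q < m" by auto
    then have "(Yb\<^sup>T * Yb) $$ (p, q) = (\<Sum>j<n. ?Q $$ (j, r + p) * ?Q $$ (j, r + q))"
      using X Yb by (simp add: scalar_prod_def lessThan_atLeast0 mcat_index[OF X Yb])
    then show "(Yb\<^sup>T * Yb) $$ (p, q) = 1\<^sub>m m $$ (p, q)" using gram[of "r + p" "r + q"] pq by simp
  qed (use Yb in auto)
qed

lemma sum_lessThan_add: "(\<Sum>j<r + m. f j) = (\<Sum>j<r. f j) + (\<Sum>j<m. f (r + j :: nat))"
  for f :: "nat \<Rightarrow> real"
  by (induction m) (simp_all add: add.assoc)

lemma orthogonal_mat_mcat_rows:
  fixes X Yb :: "real mat"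
  assumes X: "X \<in> carrier_mat n r" and Yb: "Yb \<in> carrier_mat n m" and orth: "orthogonal_mat (mcat X Yb)"
  shows "X * X\<^sup>T + Yb * Yb\<^sup>T = 1\<^sub>m n"
proof (rule eq_matI)
  let ?Q = "mcat X Yb"
  have Q: "?Q \<in> carrier_mat n (r + m)" by (rule mcat_carrier[OF X Yb])
  fix p q assume "p < dim_row (1\<^sub>m n)" "q < dim_col (1\<^sub>m n)"
  then have pq: "p < n" "q < n" by auto
  have "(X * X\<^sup>T + Yb * Yb\<^sup>T) $$ (p, q) = (\<Sum>j<r. X $$ (p, j) * X $$ (q, j)) + (\<Sum>j<m. Yb $$ (p, j) * Yb $$ (q, j))"
    using mat_mult_entry[of X n r "X\<^sup>T" n p q] mat_mult_entry[of Yb n m "Yb\<^sup>T" n p q] pq X Yb by simp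
  also have "\<dots> = (\<Sum>j<r + m. ?Q $$ (p, j) * ?Q $$ (q, j))"
    using pq by (simp add: sum_lessThan_add mcat_index[OF X Yb])
  also have "\<dots> = 1\<^sub>m n $$ (p, q)"
    using mat_mult_entry[of ?Q n "r + m" "?Q\<^sup>T" n p q] orth Q pq unfolding orthogonal_mat_def by simp
  finally show "(X * X\<^sup>T + Yb * Yb\<^sup>T) $$ (p, q) = 1\<^sub>m n $$ (p, q)" .
qed (use X Yb in auto)

lemma grass_transp_carrier:
  assumes "X \<in> carrier_mat n r" "U \<in> carrier_mat n r" "Sig \<in> carrier_mat r r" "V \<in> carrier_mat r r"
  shows "grass_transp X U Sig V t \<in> carrier_mat n n"
  unfolding grass_transp_def using assms
  by (intro add_carrier_mat minus_carrier_mat mult_carrier_mat[of _ n r] one_carrier_mat) auto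

lemma grass_transp_mult_basis:
  fixes X U Sig V Yb :: "real mat"
  assumes X: "X \<in> carrier_mat n r" and U: "U \<in> carrier_mat n r" and Sig: "Sig \<in> carrier_mat r r"
    and V: "V \<in> carrier_mat r r" and Yb: "Yb \<in> carrier_mat n m"
  shows "grass_transp X U Sig V t * Yb = Yb + X * V * (diag_fun (\<lambda>s. - sin (s * t)) Sig * (U\<^sup>T * Yb))
           + U * (diag_fun (\<lambda>s. cos (s * t) - 1) Sig * (U\<^sup>T * Yb))"
proof -
  define Sn where "Sn = diag_fun (\<lambda>s. - sin (s * t)) Sig"
  define Cm where "Cm = diag_fun (\<lambda>s. cos (s * t)) Sig"
  define a where "a = U\<^sup>T * Yb"
  have Sn: "Sn \<in> carrier_mat r r" and Cm: "Cm \<in> carrier_mat r r" and a: "a \<in> carrier_mat r m"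
    and W: "X * V \<in> carrier_mat n r"
    unfolding Sn_def Cm_def a_def using Sig U Yb X V by auto
  have "grass_transp X U Sig V t * Yb = ((X * V * Sn + U * Cm) * U\<^sup>T) * Yb + (1\<^sub>m n - U * U\<^sup>T) * Yb"
    unfolding grass_transp_def Sn_def Cm_def uminus_diag_fun carrier_matD(1)[OF X] using X U Sig V Yb
    by (intro add_mult_distrib_mat[of _ n n]) auto
  also have "\<dots> = X * V * (Sn * a) + U * (Cm * a) + (Yb - U * a)"
  proof -
    have "((X * V * Sn + U * Cm) * U\<^sup>T) * Yb = (X * V * Sn + U * Cm) * a"
      unfolding a_def using W Sn U Cm Yb by (subst assoc_mult_mat) auto
    also have "\<dots> = X * V * (Sn * a) + U * (Cm * a)"
      using W Sn U Cm a by (subst add_mult_distrib_mat) auto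
    finally show ?thesis
      unfolding a_def using U Yb by (simp add: minus_mult_distrib_mat[of _ n n])
  qed
  moreover have "U * (Cm * a) - U * a = U * (diag_fun (\<lambda>s. cos (s * t) - 1) Sig * a)"
    unfolding diag_fun_minus_one[OF Sig, symmetric] Cm_def[symmetric]
    using minus_mult_distrib_mat[OF Cm one_carrier_mat a] mult_minus_distrib_mat[of U n r "Cm * a" m a] U Cm a
    by simp
  moreover have "X * V * (Sn * a) + U * (Cm * a) + (Yb - U * a) = Yb + X * V * (Sn * a) + (U * (Cm * a) - U * a)"
    using U Cm a W Sn Yb by (intro eq_matI) auto
  ultimately show ?thesis
    unfolding Sn_def[symmetric] a_def[symmetric] by simp
qed

text \<open>The two correction terms of \<open>T Y\<close> are orthogonal: \<open>X\<^sup>T U\<close> vanishes on the columns with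
  \<open>\<sigma>\<^sub>j \<noteq> 0\<close>, and \<open>cos (\<sigma>\<^sub>j t) - 1\<close> vanishes on the others.\<close>
lemma grass_transp_basis_orthonormal:
  fixes X Yb U Sig V :: "real mat"
  assumes X: "X \<in> carrier_mat n r" and Yb: "Yb \<in> carrier_mat n m" and U: "U \<in> carrier_mat n r"
    and Sig: "Sig \<in> carrier_mat r r" and V: "V \<in> carrier_mat r r"
    and XX: "X\<^sup>T * X = 1\<^sub>m r" and XY: "X\<^sup>T * Yb = 0\<^sub>m r m" and YY: "Yb\<^sup>T * Yb = 1\<^sub>m m"
    and UU: "U\<^sup>T * U = 1\<^sub>m r" and VV: "V\<^sup>T * V = 1\<^sub>m r"
    and diag: "diagonal_mat Sig" and XUS: "X\<^sup>T * U * Sig = 0\<^sub>m r r"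
  shows "(grass_transp X U Sig V t * Yb)\<^sup>T * (grass_transp X U Sig V t * Yb) = 1\<^sub>m m"
proof -
  define a where "a = U\<^sup>T * Yb"
  define Sn where "Sn = diag_fun (\<lambda>s. - sin (s * t)) Sig"
  define C1 where "C1 = diag_fun (\<lambda>s. cos (s * t) - 1) Sig"
  define P where "P = X * V * (Sn * a)"
  define Q where "Q = U * (C1 * a)"
  have a: "a \<in> carrier_mat r m"
    unfolding a_def using U Yb by auto
  have Sn: "Sn \<in> carrier_mat r r" and C1: "C1 \<in> carrier_mat r r"
    unfolding Sn_def C1_def using Sig by simp_all
  have Sa: "Sn * a \<in> carrier_mat r m" and Ca: "C1 * a \<in> carrier_mat r m"
    using Sn C1 a by auto
  have P: "P \<in> carrier_mat n m" and Q: "Q \<in> carrier_mat n m"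
    unfolding P_def Q_def using X V U Sa Ca by auto
  note dims = carrier_matD[OF X] carrier_matD[OF Yb] carrier_matD[OF U] carrier_matD[OF V]
    carrier_matD[OF Sn] carrier_matD[OF C1] carrier_matD[OF a]
  have TY: "grass_transp X U Sig V t * Yb = Yb + P + Q"
    unfolding P_def Q_def a_def Sn_def C1_def by (rule grass_transp_mult_basis[OF X U Sig V Yb])
  have YP: "Yb\<^sup>T * P = 0\<^sub>m m m"
  proof -
    have "Yb\<^sup>T * P = (X\<^sup>T * Yb)\<^sup>T * (V * (Sn * a))"
      unfolding P_def using dims by (simp add: transpose_mult_dim assoc_mult_mat_dim)
    then show ?thesis using XY V Sa a by simp
  qed
  have PP: "P\<^sup>T * P = (Sn * a)\<^sup>T * (Sn * a)"
  proof -
    have "P\<^sup>T * P = (Sn * a)\<^sup>T * (V\<^sup>T * (X\<^sup>T * X) * V) * (Sn * a)"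
      unfolding P_def using dims by (simp add: transpose_mult_dim assoc_mult_mat_dim)
    then show ?thesis using XX VV V right_mult_one_mat[OF transpose_carrier_mat[THEN iffD2, OF Sa]] by simp
  qed
  have YQ: "Yb\<^sup>T * Q = a\<^sup>T * (C1 * a)"
    unfolding Q_def a_def using dims by (simp add: transpose_mult_dim assoc_mult_mat_dim)
  have PQ: "P\<^sup>T * Q = 0\<^sub>m m m"
  proof -
    have "X\<^sup>T * U * C1 = 0\<^sub>m r r"
      unfolding C1_def using X U Sig diag XUS by (intro mult_diag_fun_eq_0) auto
    moreover have "P\<^sup>T * Q = (Sn * a)\<^sup>T * V\<^sup>T * (X\<^sup>T * U * C1) * a"
      unfolding P_def Q_def using dims by (simp add: transpose_mult_dim assoc_mult_mat_dim)
    ultimately show ?thesis using V Sa a by simp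
  qed
  have QQ: "Q\<^sup>T * Q = (C1 * a)\<^sup>T * (C1 * a)"
  proof -
    have "Q\<^sup>T * Q = (C1 * a)\<^sup>T * (U\<^sup>T * U) * (C1 * a)"
      unfolding Q_def using dims by (simp add: transpose_mult_dim assoc_mult_mat_dim)
    then show ?thesis using UU right_mult_one_mat[OF transpose_carrier_mat[THEN iffD2, OF Ca]] by simp
  qed
  have transposed: "P\<^sup>T * Yb = (Yb\<^sup>T * P)\<^sup>T" "Q\<^sup>T * Yb = (Yb\<^sup>T * Q)\<^sup>T" "Q\<^sup>T * P = (P\<^sup>T * Q)\<^sup>T"
    "(C1 * a)\<^sup>T * a = (a\<^sup>T * (C1 * a))\<^sup>T"
    using P Q Yb a Ca dims by (simp_all add: transpose_mult_dim)
  have cancel: "(Sn * a)\<^sup>T * (Sn * a) + (a\<^sup>T * (C1 * a) + (C1 * a)\<^sup>T * a) + (C1 * a)\<^sup>T * (C1 * a) = 0\<^sub>m m m"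
    unfolding Sn_def C1_def by (rule sin_cos_gram_cancel[OF Sig a])
  show ?thesis
    unfolding TY transpose_mult_add3[OF Yb P Q] YP PP YQ PQ QQ YY transposed
  proof (rule eq_matI)
    fix p q assume "p < dim_row (1\<^sub>m m)" "q < dim_col (1\<^sub>m m)"
    then have pq: "p < m" "q < m" by auto
    have "((Sn * a)\<^sup>T * (Sn * a) + (a\<^sup>T * (C1 * a) + (a\<^sup>T * (C1 * a))\<^sup>T) + (C1 * a)\<^sup>T * (C1 * a)) $$ (p, q) = 0"
      using cancel transposed(4) pq by simp
    then show "(1\<^sub>m m + (0\<^sub>m m m + (0\<^sub>m m m)\<^sup>T) + (Sn * a)\<^sup>T * (Sn * a)
        + (a\<^sup>T * (C1 * a) + (a\<^sup>T * (C1 * a))\<^sup>T) + (0\<^sub>m m m + (0\<^sub>m m m)\<^sup>T)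
        + (C1 * a)\<^sup>T * (C1 * a)) $$ (p, q) = 1\<^sub>m m $$ (p, q)"
      using pq dims by simp
  qed (use dims in auto)
qed

lemma svd_left_factor_null:
  fixes X Dl U Sig V :: "real mat"
  assumes X: "X \<in> carrier_mat n r" and U: "U \<in> carrier_mat n r" and Sig: "Sig \<in> carrier_mat r r"
    and V: "V \<in> carrier_mat r r" and VV: "V\<^sup>T * V = 1\<^sub>m r"
    and svd: "Dl = U * Sig * V\<^sup>T" and XD: "X\<^sup>T * Dl = 0\<^sub>m r r"
  shows "X\<^sup>T * U * Sig = 0\<^sub>m r r"
proof -
  note dims = carrier_matD[OF X] carrier_matD[OF U] carrier_matD[OF Sig] carrier_matD[OF V]
  have "X\<^sup>T * U * Sig = X\<^sup>T * U * Sig * (V\<^sup>T * V)" using VV X U Sig by simp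
  also have "\<dots> = (X\<^sup>T * Dl) * V" unfolding svd using dims by (simp add: assoc_mult_mat_dim)
  also have "\<dots> = 0\<^sub>m r r" using XD V by simp
  finally show ?thesis .
qed

lemma tangent_eq_basis_mult:
  fixes X Yb Dl :: "real mat"
  assumes X: "X \<in> carrier_mat n r" and Yb: "Yb \<in> carrier_mat n m" and Dl: "Dl \<in> carrier_mat n k"
    and resolution: "X * X\<^sup>T + Yb * Yb\<^sup>T = 1\<^sub>m n" and XD: "X\<^sup>T * Dl = 0\<^sub>m r k"
  shows "Dl = Yb * (Yb\<^sup>T * Dl)"
proof -
  have "Dl = (X * X\<^sup>T + Yb * Yb\<^sup>T) * Dl" using resolution Dl by simp
  also have "\<dots> = X * (X\<^sup>T * Dl) + Yb * (Yb\<^sup>T * Dl)"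
    using X Yb Dl by (simp add: add_mult_distrib_mat[of _ n n] assoc_mult_mat[of _ n r _ n _ k]
        assoc_mult_mat[of _ n m _ n _ k])
  also have "\<dots> = Yb * (Yb\<^sup>T * Dl)" using XD X Yb Dl by simp
  finally show ?thesis .
qed

lemma grass_transp_frame:
  fixes X Yb Dl U Sig V :: "real mat" and t :: real
  assumes X: "X \<in> carrier_mat n r" and Yb: "Yb \<in> carrier_mat n (n - r)"
    and orth: "orthogonal_mat (mcat X Yb)"
    and Dl: "Dl \<in> carrier_mat n r" and XD: "X\<^sup>T * Dl = 0\<^sub>m r r"
    and U: "U \<in> carrier_mat n r" and Sig: "Sig \<in> carrier_mat r r" and V: "V \<in> carrier_mat r r"
    and UU: "U\<^sup>T * U = 1\<^sub>m r" and Vo: "orthogonal_mat V" and diag: "diagonal_mat Sig"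
    and svd: "Dl = U * Sig * V\<^sup>T"
  defines "Yt \<equiv> grass_transp X U Sig V t * Yb"
  shows "Yt \<in> carrier_mat n (n - r)" and "Yt\<^sup>T * Yt = 1\<^sub>m (n - r)"
    and "t \<cdot>\<^sub>m (grass_transp X U Sig V t * Dl) = Yt * (t \<cdot>\<^sub>m (Yb\<^sup>T * Dl))"
proof -
  have T: "grass_transp X U Sig V t \<in> carrier_mat n n" by (rule grass_transp_carrier[OF X U Sig V])
  then show Yt: "Yt \<in> carrier_mat n (n - r)" unfolding Yt_def using Yb by simp
  have VV: "V\<^sup>T * V = 1\<^sub>m r" using Vo V unfolding orthogonal_mat_def by auto
  show "Yt\<^sup>T * Yt = 1\<^sub>m (n - r)"
    unfolding Yt_def
    by (rule grass_transp_basis_orthonormal[OF X Yb U Sig V orthogonal_mat_mcat_columns[OF X Yb orth]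
          UU VV diag svd_left_factor_null[OF X U Sig V VV svd XD]])
  have M: "Yb\<^sup>T * Dl \<in> carrier_mat (n - r) r" using Yb Dl by simp
  have "Dl = Yb * (Yb\<^sup>T * Dl)"
    by (rule tangent_eq_basis_mult[OF X Yb Dl orthogonal_mat_mcat_rows[OF X Yb orth] XD])
  then have "grass_transp X U Sig V t * Dl = Yt * (Yb\<^sup>T * Dl)"
    unfolding Yt_def using T Yb M by (metis assoc_mult_mat)
  then show "t \<cdot>\<^sub>m (grass_transp X U Sig V t * Dl) = Yt * (t \<cdot>\<^sub>m (Yb\<^sup>T * Dl))"
    using mult_smult_distrib[OF Yt M] by simp
qed

text \<open>In this matrix library \<open>A - B\<close> takes the dimensions of \<open>B\<close>, so \<open>G\<close> is arbitrary.\<close>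
lemma transported_difference_carrier:
  assumes X: "X \<in> carrier_mat n r" and "U \<in> carrier_mat n r" "Sig \<in> carrier_mat r r"
    "V \<in> carrier_mat r r" and Gold: "Gold \<in> carrier_mat n r"
  shows "G - grass_transp X U Sig V t * (grass_proj X * Gold) \<in> carrier_mat n r"
proof -
  have "grass_proj X \<in> carrier_mat n n"
    unfolding grass_proj_def using X by (intro minus_carrier_mat mult_carrier_mat[of _ n r]) auto
  then show ?thesis
    using grass_transp_carrier[OF assms(1-4)] Gold by (auto intro!: minus_carrier_mat intro: mult_carrier_mat)
qed

section \<open>Local coordinates\<close>

lemma coord_idx_Sigma: "coord_idx k n r = Sigma {..<k} (\<lambda>i. {..<n i - r i} \<times> {..<r i})"
  unfolding coord_idx_def by auto

lemma finite_coord_idx: "finite (coord_idx k n r)"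
  unfolding coord_idx_Sigma by auto

lemma sum_coord_idx:
  "(\<Sum>p\<in>coord_idx k n r. f p) = (\<Sum>i<k. \<Sum>a<n i - r i. \<Sum>b<r i. f (i, a, b))"
proof -
  have "(\<Sum>i<k. \<Sum>a<n i - r i. \<Sum>b<r i. f (i, a, b)) = (\<Sum>i<k. \<Sum>ab\<in>{..<n i - r i} \<times> {..<r i}. f (i, ab))"
    by (intro sum.cong refl) (simp add: sum.cartesian_product)
  then show ?thesis
    unfolding coord_idx_Sigma by (simp add: sum.Sigma)
qed

lemma cinner_delta:
  "finite I \<Longrightarrow> q \<in> I \<Longrightarrow> cinner I u (\<lambda>p. if p = q then 1 else 0) = u q"
proof -
  assume "finite I" "q \<in> I"
  have "cinner I u (\<lambda>p. if p = q then 1 else 0) = (\<Sum>p\<in>I. if p = q then u p else 0)"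
    unfolding cinner_def by (intro sum.cong) auto
  then show ?thesis using \<open>finite I\<close> \<open>q \<in> I\<close> by simp
qed

lemma mtrace_transpose_mult:
  fixes D G :: "real mat"
  assumes "D \<in> carrier_mat a b" "G \<in> carrier_mat a b"
  shows "mtrace (D\<^sup>T * G) = (\<Sum>x<a. \<Sum>y<b. D $$ (x, y) * G $$ (x, y))"
proof -
  have "mtrace (D\<^sup>T * G) = (\<Sum>y<b. \<Sum>x<a. D $$ (x, y) * G $$ (x, y))"
    unfolding mtrace_def using assms
    by (intro sum.cong) (auto simp: scalar_prod_def lessThan_atLeast0)
  then show ?thesis by (simp add: sum.swap[of _ "{..<b}"])
qed

lemma tinner_commute:
  assumes "\<forall>i<k. A i \<in> carrier_mat (n i) (r i) \<and> B i \<in> carrier_mat (n i) (r i)"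
  shows "tinner k A B = tinner k B A"
  unfolding tinner_def
proof (intro sum.cong refl)
  fix i assume "i \<in> {..<k}"
  then have "A i \<in> carrier_mat (n i) (r i)" "B i \<in> carrier_mat (n i) (r i)" using assms by auto
  then show "mtrace ((A i)\<^sup>T * B i) = mtrace ((B i)\<^sup>T * A i)"
    by (simp add: mtrace_transpose_mult mult.commute)
qed

lemma lift_carrier: "lift n r Yt u i \<in> carrier_mat (n i) (r i)" if "Yt i \<in> carrier_mat (n i) (n i - r i)"
  using that unfolding lift_def by auto

lemma tinner_lift:
  assumes Yt: "\<forall>i<k. Yt i \<in> carrier_mat (n i) (n i - r i)"
    and Z: "\<forall>i<k. Z i \<in> carrier_mat (n i) (r i)"
  shows "tinner k (lift n r Yt u) Z = cinner (coord_idx k n r) u (coord Yt Z)"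
proof -
  have "mtrace ((lift n r Yt u i)\<^sup>T * Z i) = (\<Sum>a<n i - r i. \<Sum>b<r i. u (i, a, b) * coord Yt Z (i, a, b))"
    if i: "i < k" for i
  proof -
    define D where "D = mat (n i - r i) (r i) (\<lambda>(a, b). u (i, a, b))"
    have D: "D \<in> carrier_mat (n i - r i) (r i)" unfolding D_def by simp
    have Yti: "Yt i \<in> carrier_mat (n i) (n i - r i)" and Zi: "Z i \<in> carrier_mat (n i) (r i)"
      using Yt Z i by auto
    have "(lift n r Yt u i)\<^sup>T * Z i = D\<^sup>T * ((Yt i)\<^sup>T * Z i)"
      unfolding lift_def D_def[symmetric] using Yti D Zi
      by (simp add: transpose_mult_dim assoc_mult_mat_dim)
    then show ?thesis
      using mtrace_transpose_mult[OF D, of "(Yt i)\<^sup>T * Z i"] Yti Zi by (simp add: D_def coord_def)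
  qed
  then show ?thesis
    unfolding tinner_def cinner_def sum_coord_idx by simp
qed

lemma coord_lift:
  assumes "i < k" "a < n i - r i" "b < r i"
    and Yt: "Yt i \<in> carrier_mat (n i) (n i - r i)" and O: "(Yt i)\<^sup>T * Yt i = 1\<^sub>m (n i - r i)"
  shows "coord Yt (lift n r Yt d) (i, a, b) = d (i, a, b)"
proof -
  define D where "D = mat (n i - r i) (r i) (\<lambda>(a, b). d (i, a, b))"
  have D: "D \<in> carrier_mat (n i - r i) (r i)" unfolding D_def by simp
  have "(Yt i)\<^sup>T * (Yt i * D) = D"
    using Yt D O by (simp add: assoc_mult_mat_dim[symmetric])
  then show ?thesis unfolding coord_def lift_def D_def[symmetric] using assms by (simp add: D_def)
qed

lemma coord_lift_on_idx:
  assumes Yt: "\<forall>i<k. Yt i \<in> carrier_mat (n i) (n i - r i) \<and> (Yt i)\<^sup>T * Yt i = 1\<^sub>m (n i - r i)"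
    and p: "p \<in> coord_idx k n r"
  shows "coord Yt (lift n r Yt d) p = d p"
  using p Yt coord_lift[of _ k _ n r _ Yt d] unfolding coord_idx_def by auto

lemma lift_coord:
  assumes Yt: "Yt i \<in> carrier_mat (n i) (n i - r i)" and O: "(Yt i)\<^sup>T * Yt i = 1\<^sub>m (n i - r i)"
    and M: "M \<in> carrier_mat (n i - r i) (r i)" and Z: "Z i = Yt i * M"
  shows "lift n r Yt (coord Yt Z) i = Z i"
proof -
  have "(Yt i)\<^sup>T * Z i = M"
    unfolding Z using Yt M O by (simp add: assoc_mult_mat_dim[symmetric])
  moreover have "mat (n i - r i) (r i) (\<lambda>(a, b). coord Yt Z (i, a, b)) = (Yt i)\<^sup>T * Z i"
    using Yt M Z by (intro eq_matI) (auto simp: coord_def)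
  ultimately show ?thesis unfolding lift_def Z by simp
qed

lemma coord_diff_add_smult:
  fixes Yt A B C :: "real mat"
  assumes Yt: "Yt \<in> carrier_mat n m" and A: "A \<in> carrier_mat n r" and B: "B \<in> carrier_mat n r"
    and C: "C \<in> carrier_mat n r" and a: "a < m" and b: "b < r"
  shows "(Yt\<^sup>T * (A - c1 \<cdot>\<^sub>m B + c2 \<cdot>\<^sub>m C)) $$ (a, b)
       = (Yt\<^sup>T * A) $$ (a, b) - c1 * (Yt\<^sup>T * B) $$ (a, b) + c2 * (Yt\<^sup>T * C) $$ (a, b)"
  using assms
  by (simp add: scalar_prod_def lessThan_atLeast0 algebra_simps sum.distrib sum_subtractf sum_distrib_left)

lemma tinner_eq_cinner_coord:
  assumes Yt: "\<forall>i<k. Yt i \<in> carrier_mat (n i) (n i - r i)"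
    and S: "\<forall>i<k. lift n r Yt (coord Yt S) i = S i"
    and Y: "\<forall>i<k. Y i \<in> carrier_mat (n i) (r i)"
  shows "tinner k S Y = cinner (coord_idx k n r) (coord Yt Y) (coord Yt S)"
  using S tinner_lift[OF Yt Y, of "coord Yt S"] unfolding tinner_def cinner_def
  by (simp add: mult.commute)

lemma coord_bfgs_tangent_update:
  fixes k :: nat and n r :: "nat \<Rightarrow> nat" and Yt S Y :: "nat \<Rightarrow> real mat"
    and H :: "cidx \<Rightarrow> cidx \<Rightarrow> real"
  defines "I \<equiv> coord_idx k n r"
  assumes Yt: "\<forall>i<k. Yt i \<in> carrier_mat (n i) (n i - r i) \<and> (Yt i)\<^sup>T * Yt i = 1\<^sub>m (n i - r i)"
    and S: "\<forall>i<k. lift n r Yt (coord Yt S) i = S i"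
    and Y: "\<forall>i<k. Y i \<in> carrier_mat (n i) (r i)"
    and p: "p \<in> I" and q: "q \<in> I"
  defines "s \<equiv> coord Yt S" and "y \<equiv> coord Yt Y"
  shows "coord Yt (bfgs_tangent_update k (\<lambda>Z. lift n r Yt (cmv I H (coord Yt Z))) S Y
                      (lift n r Yt (\<lambda>p'. if p' = q then 1 else 0))) p
         = H p q - cmv I H s p * cmv I H s q / cinner I s (cmv I H s) + y p * y q / cinner I y s"
proof -
  define E where "E = lift n r Yt (\<lambda>p'. if p' = q then 1 else 0)"
  define HL where "HL = (\<lambda>Z. lift n r Yt (cmv I H (coord Yt Z)))"
  have fin: "finite I" unfolding I_def by (rule finite_coord_idx)
  have Ytc: "\<forall>i<k. Yt i \<in> carrier_mat (n i) (n i - r i)" using Yt by blast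
  have liftc: "\<forall>i<k. lift n r Yt u i \<in> carrier_mat (n i) (r i)" for u
    using Ytc lift_carrier by blast
  have Sc: "\<forall>i<k. S i \<in> carrier_mat (n i) (r i)" using S liftc by metis
  have coord_lift: "coord Yt (lift n r Yt u) p' = u p'" if "p' \<in> I" for u p'
    using coord_lift_on_idx[OF Yt] that unfolding I_def by blast
  have tinner_lift': "tinner k (lift n r Yt u) Z = cinner I u (coord Yt Z)"
    if "\<forall>i<k. Z i \<in> carrier_mat (n i) (r i)" for u Z
    unfolding I_def by (rule tinner_lift[OF Ytc that])
  have "tinner k (HL S) E = cmv I H s q"
    unfolding HL_def E_def tinner_lift'[OF liftc] s_def
    using cinner_delta[OF fin q] coord_lift by (simp add: cinner_def cong: sum.cong)
  moreover have "tinner k (HL S) S = cinner I s (cmv I H s)"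
    unfolding HL_def tinner_lift'[OF Sc] s_def cinner_def by (simp add: mult.commute)
  moreover have "tinner k Y E = y q"
    using tinner_commute[of k Y n r E] Y liftc tinner_lift'[OF Y, of "\<lambda>p'. if p' = q then 1 else 0"]
      cinner_delta[OF fin q, of y]
    unfolding E_def y_def cinner_def by (simp add: mult.commute)
  moreover have "tinner k S Y = cinner I y s"
    unfolding I_def s_def y_def by (rule tinner_eq_cinner_coord[OF Ytc S Y])
  moreover have "coord Yt (HL E) p = H p q" and "coord Yt (HL S) p = cmv I H s p"
    unfolding HL_def coord_lift[OF p] E_def cmv_def s_def
    using cinner_delta[OF fin q, of "H p"] coord_lift by (simp_all add: cinner_def cong: sum.cong)
  moreover have "coord Yt (bfgs_tangent_update k HL S Y E) p
      = coord Yt (HL E) p - tinner k (HL S) E / tinner k (HL S) S * coord Yt (HL S) p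
        + tinner k Y E / tinner k S Y * coord Yt Y p"
  proof -
    obtain i a b where iab: "p = (i, a, b)" "i < k" "a < n i - r i" "b < r i"
      using p unfolding I_def coord_idx_def by auto
    have coord_at: "coord Yt Z p = ((Yt i)\<^sup>T * Z i) $$ (a, b)" for Z
      unfolding coord_def iab(1) by simp
    show ?thesis
      unfolding coord_at bfgs_tangent_update_def HL_def
      by (rule coord_diff_add_smult) (use iab Ytc liftc Y in auto)
  qed
  ultimately show ?thesis
    unfolding E_def[symmetric] HL_def[symmetric] y_def by (simp add: mult.commute)
qed

theorem theorem6p6:
  fixes k :: nat and n r :: "nat \<Rightarrow> nat"
    and X Yb Dl U Sig V Gold Gnew :: "nat \<Rightarrow> real mat"
    and t :: real
    and H L :: "cidx \<Rightarrow> cidx \<Rightarrow> real"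
  assumes dims: "\<forall>i<k. r i \<le> n i"
    and X_car: "\<forall>i<k. X i \<in> carrier_mat (n i) (r i)"
    and Yb_car: "\<forall>i<k. Yb i \<in> carrier_mat (n i) (n i - r i)"
    and XY_orth: "\<forall>i<k. orthogonal_mat (mcat (X i) (Yb i))"
    and Dl_tan: "\<forall>i<k. Dl i \<in> carrier_mat (n i) (r i) \<and> (X i)\<^sup>T * Dl i = 0\<^sub>m (r i) (r i)"
    and svd: "\<forall>i<k. U i \<in> carrier_mat (n i) (r i) \<and> Sig i \<in> carrier_mat (r i) (r i)
                  \<and> V i \<in> carrier_mat (r i) (r i)
                  \<and> (U i)\<^sup>T * U i = 1\<^sub>m (r i) \<and> orthogonal_mat (V i)
                  \<and> diagonal_mat (Sig i) \<and> (\<forall>j<r i. 0 \<le> Sig i $$ (j, j))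
                  \<and> Dl i = U i * Sig i * (V i)\<^sup>T"
    and grads: "\<forall>i<k. Gold i \<in> carrier_mat (n i) (r i) \<and> Gnew i \<in> carrier_mat (n i) (r i)"
    and HLL: "\<forall>p\<in>coord_idx k n r. \<forall>q\<in>coord_idx k n r. H p q = cmm (coord_idx k n r) L (ctransp L) p q"
    and L_inv: "cinvertible (coord_idx k n r) L"
  defines "Yt \<equiv> (\<lambda>i. grass_transp (X i) (U i) (Sig i) (V i) t * Yb i)"
    and "S \<equiv> (\<lambda>i. t \<cdot>\<^sub>m (grass_transp (X i) (U i) (Sig i) (V i) t * Dl i))"
    and "Yv \<equiv> (\<lambda>i. grass_proj (grass_geod (X i) (U i) (Sig i) (V i) t) * Gnew i
                   - grass_transp (X i) (U i) (Sig i) (V i) t * (grass_proj (X i) * Gold i))"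
  assumes curv: "tinner k S Yv > 0"
  shows "bfgs_optimal (coord_idx k n r) H L (coord Yt S) (coord Yt Yv)
           (\<lambda>p q. coord Yt (bfgs_tangent_update k
                (\<lambda>Z. lift n r Yt (cmv (coord_idx k n r) H (coord Yt Z))) S Yv
                (lift n r Yt (\<lambda>p'. if p' = q then 1 else 0))) p)"
proof -
  have frame: "Yt i \<in> carrier_mat (n i) (n i - r i) \<and> (Yt i)\<^sup>T * Yt i = 1\<^sub>m (n i - r i)
      \<and> S i = Yt i * (t \<cdot>\<^sub>m ((Yb i)\<^sup>T * Dl i))" if "i < k" for i
    unfolding Yt_def S_def using that X_car Yb_car XY_orth Dl_tan svd
    by (intro conjI grass_transp_frame) auto
  then have Yt: "\<forall>i<k. Yt i \<in> carrier_mat (n i) (n i - r i) \<and> (Yt i)\<^sup>T * Yt i = 1\<^sub>m (n i - r i)"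
    by blast
  have S_lift: "\<forall>i<k. lift n r Yt (coord Yt S) i = S i"
  proof (intro allI impI)
    fix i assume i: "i < k"
    have "t \<cdot>\<^sub>m ((Yb i)\<^sup>T * Dl i) \<in> carrier_mat (n i - r i) (r i)"
      using Yb_car Dl_tan i by auto
    then show "lift n r Yt (coord Yt S) i = S i"
      using lift_coord[of Yt i n r] frame[OF i] by blast
  qed
  have Yv: "\<forall>i<k. Yv i \<in> carrier_mat (n i) (r i)"
    unfolding Yv_def by (intro allI impI transported_difference_carrier) (use X_car svd grads in auto)
  interpret bfgs_step "coord_idx k n r" H L "coord Yt S" "coord Yt Yv"
    using finite_coord_idx HLL L_inv curv tinner_eq_cinner_coord[OF _ S_lift Yv] Yt
    by unfold_locales auto
  show ?thesis
    by (rule bfgs_optimal_update) (use coord_bfgs_tangent_update[OF Yt S_lift Yv] in simp)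
qed

end
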